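(* Let $I=\mathcal{M}^0[K,G,K;P]$ be a finite Rees $0$-matrix semigroup with $|K|=2$, where $P$ is the $2\times2$ matrix with $p_{\kappa,\kappa}=e$ and $p_{\lambda,\kappa}=0$ for $\lambda\ne\kappa$. If $|G|=1$, then $\sigma_i(I)=\infty$. If $|G|>1$, then $\sigma_i(I)=n+1$, where $n$ is the minimum index of a proper subgroup of $G$.
   Context: $G$ is a finite group with identity $e$. $\mathcal{M}^0[K,G,K;P]$ is $(K\times G\times K)\cup\{0\}$ with $(\kappa,g,\lambda)(\mu,h,\nu)=(\kappa,gp_{\lambda,\mu}h,\nu)$ if $p_{\lambda,\mu}\ne0$, $=0$ otherwise, and $0$ a zero element; it is an inverse semigroup. An inverse subsemigroup is a subsemigroup closed under taking the unique inverse $a^{-1}$ (with $aa^{-1}a=a$, $a^{-1}aa^{-1}=a^{-1}$). $\sigma_i(I)$ is the least positive integer $n$ such that $I$ is the union of $n$ proper inverse subsemigroups, or $\infty$ if none exists. *)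

theory Defs
  imports "HOL-Algebra.Algebra" "HOL-Library.Extended_Nat"
begin

text \<open>Elements: None is the zero,
  Some (kappa, g, lambda) is the triple. The sandwich matrix P has entries
  in G with a zero adjoined: P l m = None means p_{l,m} = 0.\<close>

definition rees0_carrier :: "'k set \<Rightarrow> ('g, 'b) monoid_scheme \<Rightarrow> ('k \<times> 'g \<times> 'k) option set" where
  "rees0_carrier K G = {None} \<union> Some ` (K \<times> carrier G \<times> K)"

fun rees0_mult :: "('g, 'b) monoid_scheme \<Rightarrow> ('k \<Rightarrow> 'k \<Rightarrow> 'g option)
    \<Rightarrow> ('k \<times> 'g \<times> 'k) option \<Rightarrow> ('k \<times> 'g \<times> 'k) option \<Rightarrow> ('k \<times> 'g \<times> 'k) option" where
  "rees0_mult G P (Some (k1, g, l1)) (Some (k2, h, l2)) =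
     (case P l1 k2 of None \<Rightarrow> None | Some p \<Rightarrow> Some (k1, g \<otimes>\<^bsub>G\<^esub> p \<otimes>\<^bsub>G\<^esub> h, l2))"
| "rees0_mult G P _ _ = None"

definition diag_matrix :: "('g, 'b) monoid_scheme \<Rightarrow> 'k \<Rightarrow> 'k \<Rightarrow> 'g option" where
  "diag_matrix G l k = (if l = k then Some \<one>\<^bsub>G\<^esub> else None)"

text \<open>Inverse subsemigroup of a semigroup (I, mul): a subset closed under
  multiplication and under taking (the unique) inverse.\<close>
definition inverse_subsemigroup :: "'a set \<Rightarrow> ('a \<Rightarrow> 'a \<Rightarrow> 'a) \<Rightarrow> 'a set \<Rightarrow> bool" where
  "inverse_subsemigroup I mul S \<longleftrightarrow>
     S \<subseteq> I \<and>
     (\<forall>a\<in>S. \<forall>b\<in>S. mul a b \<in> S) \<and>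
     (\<forall>a\<in>S. \<forall>b\<in>I. mul (mul a b) a = a \<and> mul (mul b a) b = b \<longrightarrow> b \<in> S)"

definition sigma_i :: "'a set \<Rightarrow> ('a \<Rightarrow> 'a \<Rightarrow> 'a) \<Rightarrow> enat" where
  "sigma_i I mul =
     (if \<exists>n C. finite C \<and> card C = n \<and> (\<forall>S\<in>C. inverse_subsemigroup I mul S \<and> S \<noteq> I) \<and> \<Union>C = I
      then enat (LEAST n. \<exists>C. finite C \<and> card C = n \<and>
               (\<forall>S\<in>C. inverse_subsemigroup I mul S \<and> S \<noteq> I) \<and> \<Union>C = I)
      else \<infinity>)"

definition min_proper_index :: "('g, 'b) monoid_scheme \<Rightarrow> nat" where
  "min_proper_index G =
     (LEAST m. \<exists>H. subgroup H G \<and> H \<noteq> carrier G \<and> card (rcosets\<^bsub>G\<^esub> H) = m)"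

end

theory Submission
  imports Defs
begin

text \<open>The semigroup is the Brandt semigroup B(G,2) on K = {a,b}. In an inverse subsemigroup S
  containing a corner element (a,g,b), the (a,a)-block is a subgroup H of G and the (a,b)-block
  is the coset H g; if H = G then S is everything. So in a cover by proper inverse
  subsemigroups the corner is covered by cosets of proper subgroups, at most |G|/n elements each,
  which takes at least n members; and if every member meets the corner, their (a,a)-blocks are
  proper subgroups covering G, which takes n + 1 since they all contain 1. Conversely, for a
  subgroup H of index n, the diagonal together with one copy of B(H,2) per right coset of H,
  twisted so that its corner block is that coset, is a cover by n + 1 members. For trivial G
  the corner block would be a proper subgroup, so no cover exists.\<close>

definition proper_inverse_cover :: "'a set \<Rightarrow> ('a \<Rightarrow> 'a \<Rightarrow> 'a) \<Rightarrow> 'a set set \<Rightarrow> bool" where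
  "proper_inverse_cover I mul C \<longleftrightarrow>
     finite C \<and> (\<forall>S\<in>C. inverse_subsemigroup I mul S \<and> S \<noteq> I) \<and> \<Union>C = I"

lemma sigma_i_eq_infinity:
  assumes "\<And>C. \<not> proper_inverse_cover I mul C"
  shows "sigma_i I mul = \<infinity>"
  using assms unfolding sigma_i_def proper_inverse_cover_def by auto

lemma sigma_i_eq_enat:
  assumes C: "proper_inverse_cover I mul C" and m: "card C = m"
    and least: "\<And>D. proper_inverse_cover I mul D \<Longrightarrow> m \<le> card D"
  shows "sigma_i I mul = enat m"
proof -
  let ?P = "\<lambda>n. \<exists>D. finite D \<and> card D = n \<and>
              (\<forall>S\<in>D. inverse_subsemigroup I mul S \<and> S \<noteq> I) \<and> \<Union>D = I"
  have P: "?P n \<longleftrightarrow> (\<exists>D. proper_inverse_cover I mul D \<and> card D = n)" for n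
    unfolding proper_inverse_cover_def by blast
  have "?P m" using C m unfolding P by blast
  moreover have "(LEAST n. ?P n) = m"
    using \<open>?P m\<close> least unfolding P by (intro Least_equality) auto
  ultimately show ?thesis unfolding sigma_i_def by auto
qed

context group
begin

lemma min_proper_index_le_index:
  assumes "subgroup H G" "H \<noteq> carrier G"
  shows "min_proper_index G \<le> card (rcosets H)"
  unfolding min_proper_index_def using assms by (intro Least_le) blast

lemma min_proper_index_attained:
  assumes "subgroup H G" "H \<noteq> carrier G"
  obtains H0 where "subgroup H0 G" "H0 \<noteq> carrier G" "card (rcosets H0) = min_proper_index G"
  using LeastI_ex[of "\<lambda>m. \<exists>H. subgroup H G \<and> H \<noteq> carrier G \<and> card (rcosets H) = m"] assms that
  unfolding min_proper_index_def by blast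

lemma min_proper_index_mult_card_le:
  assumes "subgroup H G" "H \<noteq> carrier G"
  shows "min_proper_index G * card H \<le> order G"
  using lagrange[OF assms(1)] min_proper_index_le_index[OF assms] by (metis mult_le_mono1)

lemma two_le_index:
  assumes "finite (carrier G)" "subgroup H G" "H \<noteq> carrier G"
  shows "2 \<le> card (rcosets H)"
proof (rule ccontr)
  assume "\<not> 2 \<le> card (rcosets H)"
  then have "card (rcosets H) * card H \<le> 1 * card H" by (intro mult_le_mono1) simp
  then have "order G \<le> card H" using lagrange[OF assms(2)] by simp
  moreover have "card H < order G"
    using assms subgroup.subset unfolding order_def by (metis psubsetI psubset_card_mono)
  ultimately show False by simp
qed

lemma two_le_min_proper_index:
  assumes "finite (carrier G)" "subgroup H G" "H \<noteq> carrier G"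
  shows "2 \<le> min_proper_index G"
proof -
  obtain H0 where "subgroup H0 G" "H0 \<noteq> carrier G" "card (rcosets H0) = min_proper_index G"
    using min_proper_index_attained[OF assms(2,3)] .
  then show ?thesis using two_le_index[OF assms(1)] by metis
qed

lemma min_proper_index_le_card_if_rcosets_cover:
  assumes fin: "finite (carrier G)"
    and cosets: "\<And>A. A \<in> \<A> \<Longrightarrow> \<exists>H. subgroup H G \<and> H \<noteq> carrier G \<and> A \<in> rcosets H"
    and cover: "carrier G \<subseteq> \<Union>\<A>"
  shows "min_proper_index G \<le> card \<A>"
proof -
  let ?n = "min_proper_index G"
  have small: "?n * card A \<le> order G" if A: "A \<in> \<A>" for A
  proof -
    obtain H where H: "subgroup H G" "H \<noteq> carrier G" "A \<in> rcosets H" using cosets[OF A] by blast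
    then have "card A = card H" using card_rcosets_equal subgroup.subset by metis
    then show ?thesis using min_proper_index_mult_card_le[OF H(1,2)] by simp
  qed
  have "\<A> \<subseteq> Pow (carrier G)" using cosets rcosets_subset_PowG by blast
  then have "order G \<le> card (\<Union>\<A>)"
    unfolding order_def using cover fin by (intro card_mono) (auto intro: finite_subset)
  also have "\<dots> \<le> sum card \<A>" by (rule card_Union_le_sum_card)
  finally have "?n * order G \<le> (\<Sum>A\<in>\<A>. ?n * card A)"
    by (simp add: sum_distrib_left[symmetric])
  also have "\<dots> \<le> card \<A> * order G" using sum_mono[OF small] by simp
  finally show ?thesis using fin order_gt_0_iff_finite by (simp add: mult.commute)
qed

text \<open>Each proper subgroup has at most |G|/n elements and they all share the identity, so
  n of them cover at most n (|G|/n - 1) + 1 < |G| elements.\<close>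
lemma Suc_min_proper_index_le_card_if_subgroups_cover:
  assumes fin: "finite (carrier G)" and nonempty: "\<H> \<noteq> {}"
    and proper: "\<And>H. H \<in> \<H> \<Longrightarrow> subgroup H G \<and> H \<noteq> carrier G"
    and cover: "carrier G \<subseteq> \<Union>\<H>"
  shows "min_proper_index G + 1 \<le> card \<H>"
proof (rule ccontr)
  let ?n = "min_proper_index G"
  assume "\<not> ?thesis"
  then have few: "card \<H> \<le> ?n" by simp
  have "\<H> \<subseteq> Pow (carrier G)" using proper subgroup.subset by blast
  then have fin\<H>: "finite \<H>" using fin by (simp add: finite_subset)
  have one: "\<one> \<in> H" and small: "?n * card H \<le> order G" and finH: "finite H"
    if "H \<in> \<H>" for H
  proof -
    show "\<one> \<in> H" using proper[OF that] subgroup.one_closed by blast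
    show "?n * card H \<le> order G" using proper[OF that] min_proper_index_mult_card_le by blast
    show "finite H" using proper[OF that] subgroup.subset fin by (blast intro: finite_subset)
  qed
  obtain H0 where H0: "H0 \<in> \<H>" using nonempty by blast
  have n2: "2 \<le> ?n" using two_le_min_proper_index[OF fin] proper[OF H0] by blast
  have "?n \<le> ?n * card H0" using one[OF H0] finH[OF H0] by (auto simp: Suc_le_eq card_gt_0_iff)
  then have n_le: "?n \<le> order G" using small[OF H0] by linarith
  have "order G - 1 = card (carrier G - {\<one>})" unfolding order_def by simp
  also have "\<dots> \<le> card (\<Union>H\<in>\<H>. H - {\<one>})"
    using cover fin\<H> finH by (intro card_mono) auto
  also have "\<dots> \<le> (\<Sum>H\<in>\<H>. card (H - {\<one>}))" by (rule card_UN_le[OF fin\<H>])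
  also have "\<dots> = (\<Sum>H\<in>\<H>. card H - 1)" using one finH by (intro sum.cong) auto
  finally have "?n * (order G - 1) \<le> (\<Sum>H\<in>\<H>. ?n * (card H - 1))"
    by (simp add: sum_distrib_left[symmetric])
  also have "\<dots> \<le> (\<Sum>H\<in>\<H>. order G - ?n)"
    using small by (intro sum_mono) (simp add: diff_mult_distrib2 diff_le_mono)
  also have "\<dots> \<le> ?n * (order G - ?n)" using few by simp
  finally have "order G - 1 \<le> order G - ?n" using n2 by simp
  then show False using n2 n_le by linarith
qed

end

fun rees0_inv :: "('g, 'b) monoid_scheme \<Rightarrow> ('k \<times> 'g \<times> 'k) option \<Rightarrow> ('k \<times> 'g \<times> 'k) option" where
  "rees0_inv G None = None"
| "rees0_inv G (Some (i, g, j)) = Some (j, inv\<^bsub>G\<^esub> g, i)"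

locale brandt = group +
  fixes K :: "'k set"
begin

abbreviation B :: "('k \<times> 'a \<times> 'k) option set" where
  "B \<equiv> rees0_carrier K G"

abbreviation bmul where
  "bmul \<equiv> rees0_mult G (diag_matrix G)"

lemma Some_in_B [simp]: "Some (i, g, j) \<in> B \<longleftrightarrow> i \<in> K \<and> g \<in> carrier G \<and> j \<in> K"
  unfolding rees0_carrier_def by auto

lemma None_in_B [simp]: "None \<in> B"
  unfolding rees0_carrier_def by auto

lemma in_B_cases:
  assumes "x \<in> B"
  obtains "x = None" | i g j where "x = Some (i, g, j)" "i \<in> K" "g \<in> carrier G" "j \<in> K"
  using assms unfolding rees0_carrier_def by auto

lemma bmul_Some_Some [simp]:
  "g \<in> carrier G \<Longrightarrow>
    bmul (Some (i, g, j)) (Some (k, h, l)) = (if j = k then Some (i, g \<otimes> h, l) else None)"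
  by (simp add: diag_matrix_def)

declare rees0_mult.simps(1) [simp del]

lemma rees0_inv_in_B: "x \<in> B \<Longrightarrow> rees0_inv G x \<in> B"
  by (auto elim: in_B_cases)

lemma bmul_inverse_iff:
  assumes "x \<in> B" "y \<in> B"
  shows "bmul (bmul x y) x = x \<and> bmul (bmul y x) y = y \<longleftrightarrow> y = rees0_inv G x"
proof -
  have inv_iff: "g \<otimes> h \<otimes> g = g \<longleftrightarrow> h = inv g" if "g \<in> carrier G" "h \<in> carrier G" for g h
    using that by (metis inv_closed l_inv m_assoc m_closed r_cancel_one r_inv r_one)
  from assms(1) show ?thesis
  proof (cases rule: in_B_cases)
    case x: (2 i g j)
    from assms(2) show ?thesis
    proof (cases rule: in_B_cases)
      case y: (2 k h l)
      have "h = inv g \<Longrightarrow> h \<otimes> g \<otimes> h = h" using x y by (simp add: m_assoc)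
      then show ?thesis using x y inv_iff[of g h] by (auto split: if_splits)
    qed (use x in simp)
  qed (use assms(2) in \<open>cases rule: in_B_cases; simp\<close>)
qed

lemma inverse_subsemigroup_iff:
  "inverse_subsemigroup B bmul S \<longleftrightarrow>
     S \<subseteq> B \<and> (\<forall>x\<in>S. \<forall>y\<in>S. bmul x y \<in> S) \<and> (\<forall>x\<in>S. rees0_inv G x \<in> S)"
  unfolding inverse_subsemigroup_def by (smt (verit, best) bmul_inverse_iff rees0_inv_in_B subset_iff)

definition block :: "('k \<times> 'a \<times> 'k) option set \<Rightarrow> 'k \<Rightarrow> 'k \<Rightarrow> 'a set" where
  "block S i j = {x \<in> carrier G. Some (i, x, j) \<in> S}"

lemma block_subgroup:
  assumes S: "inverse_subsemigroup B bmul S" and g: "Some (i, g, j) \<in> S"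
  shows "subgroup (block S i i) G"
proof -
  have mul: "\<And>x y. x \<in> S \<Longrightarrow> y \<in> S \<Longrightarrow> bmul x y \<in> S"
    and inv: "\<And>x. x \<in> S \<Longrightarrow> rees0_inv G x \<in> S" and "S \<subseteq> B"
    using S by (auto simp: inverse_subsemigroup_iff)
  then have gG: "g \<in> carrier G" using g by auto
  have "bmul (Some (i, g, j)) (rees0_inv G (Some (i, g, j))) \<in> S" using mul inv g by blast
  then have one: "\<one> \<in> block S i i" using gG by (simp add: block_def)
  show ?thesis
  proof (rule subgroupI)
    fix x y assume x: "x \<in> block S i i" and y: "y \<in> block S i i"
    show "inv x \<in> block S i i" using inv[of "Some (i, x, i)"] x by (auto simp: block_def)
    show "x \<otimes> y \<in> block S i i"
      using mul[of "Some (i, x, i)" "Some (i, y, i)"] x y by (auto simp: block_def)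
  qed (use one in \<open>auto simp: block_def\<close>)
qed

lemma block_eq_rcos:
  assumes S: "inverse_subsemigroup B bmul S" and g: "Some (i, g, j) \<in> S"
  shows "block S i j = block S i i #> g"
proof -
  have mul: "\<And>x y. x \<in> S \<Longrightarrow> y \<in> S \<Longrightarrow> bmul x y \<in> S"
    and inv: "\<And>x. x \<in> S \<Longrightarrow> rees0_inv G x \<in> S" and "S \<subseteq> B"
    using S by (auto simp: inverse_subsemigroup_iff)
  then have gG: "g \<in> carrier G" using g by auto
  show ?thesis
  proof
    show "block S i j \<subseteq> block S i i #> g"
    proof
      fix x assume "x \<in> block S i j"
      then have x: "x \<in> carrier G" "Some (i, x, j) \<in> S" by (auto simp: block_def)
      then have "bmul (Some (i, x, j)) (rees0_inv G (Some (i, g, j))) \<in> S"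
        using mul inv g by blast
      then have "x \<otimes> inv g \<in> block S i i" using x gG by (auto simp: block_def)
      moreover have "x = x \<otimes> inv g \<otimes> g" using x gG by (simp add: m_assoc)
      ultimately show "x \<in> block S i i #> g" unfolding r_coset_def by blast
    qed
    show "block S i i #> g \<subseteq> block S i j"
    proof
      fix x assume "x \<in> block S i i #> g"
      then obtain h where h: "h \<in> block S i i" "x = h \<otimes> g" unfolding r_coset_def by blast
      have "bmul (Some (i, h, i)) (Some (i, g, j)) \<in> S" using g h by (intro mul) (auto simp: block_def)
      then show "x \<in> block S i j" using h gG by (auto simp: block_def)
    qed
  qed
qed

definition brandt_sub :: "'a set \<Rightarrow> ('k \<Rightarrow> 'a) \<Rightarrow> ('k \<times> 'a \<times> 'k) option set" where
  "brandt_sub H c = insert None {Some (i, c i \<otimes> h \<otimes> inv (c j), j) | i j h. i \<in> K \<and> j \<in> K \<and> h \<in> H}"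

lemma brandt_sub_memI:
  "i \<in> K \<Longrightarrow> j \<in> K \<Longrightarrow> h \<in> H \<Longrightarrow> Some (i, c i \<otimes> h \<otimes> inv (c j), j) \<in> brandt_sub H c"
  unfolding brandt_sub_def by blast

lemma brandt_sub_cases:
  assumes "x \<in> brandt_sub H c"
  obtains "x = None" | i j h where "x = Some (i, c i \<otimes> h \<otimes> inv (c j), j)" "i \<in> K" "j \<in> K" "h \<in> H"
  using assms unfolding brandt_sub_def by blast

lemma brandt_sub_inverse_subsemigroup:
  assumes H: "subgroup H G" and c: "c ` K \<subseteq> carrier G"
  shows "inverse_subsemigroup B bmul (brandt_sub H c)"
  unfolding inverse_subsemigroup_iff
proof (intro conjI ballI subsetI)
  have hG: "h \<in> carrier G" if "h \<in> H" for h using subgroup.mem_carrier[OF H that] .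
  have cG: "c i \<in> carrier G" if "i \<in> K" for i using c that by blast
  fix x assume x: "x \<in> brandt_sub H c"
  then show "x \<in> B"
    by (cases rule: brandt_sub_cases) (use cG hG in simp_all)
  from x show "rees0_inv G x \<in> brandt_sub H c"
  proof (cases rule: brandt_sub_cases)
    case (2 i j h)
    have "inv (c i \<otimes> h \<otimes> inv (c j)) = c j \<otimes> inv h \<otimes> inv (c i)"
      using 2 cG hG by (simp add: inv_mult_group m_assoc)
    then show ?thesis
      using 2 brandt_sub_memI[of j i "inv h"] subgroup.m_inv_closed[OF H] by simp
  qed (simp add: brandt_sub_def)
  fix y assume y: "y \<in> brandt_sub H c"
  from x show "bmul x y \<in> brandt_sub H c"
  proof (cases rule: brandt_sub_cases)
    case x: (2 i j h)
    from y show ?thesis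
    proof (cases rule: brandt_sub_cases)
      case y: (2 k l h')
      show ?thesis
      proof (cases "j = k")
        case True
        have cancel: "inv a \<otimes> (a \<otimes> z) = z" if "a \<in> carrier G" "z \<in> carrier G" for a z
          using that m_assoc[of "inv a" a z] by simp
        have "c i \<otimes> h \<otimes> inv (c j) \<otimes> (c j \<otimes> h' \<otimes> inv (c l)) = c i \<otimes> (h \<otimes> h') \<otimes> inv (c l)"
          using x y cG hG by (simp add: m_assoc cancel)
        moreover have "Some (i, c i \<otimes> (h \<otimes> h') \<otimes> inv (c l), l) \<in> brandt_sub H c"
          using x y subgroup.m_closed[OF H] by (intro brandt_sub_memI) auto
        ultimately show ?thesis using x y cG hG True by simp
      qed (use x y cG hG in \<open>simp add: brandt_sub_def\<close>)
    qed (simp add: brandt_sub_def)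
  qed (simp add: brandt_sub_def)
qed

lemma brandt_sub_neq_B:
  assumes H: "subgroup H G" "H \<noteq> carrier G" and i: "i \<in> K" "c i \<in> carrier G"
  shows "brandt_sub H c \<noteq> B"
proof
  assume eq: "brandt_sub H c = B"
  obtain x where x: "x \<in> carrier G" "x \<notin> H" using H(2) subgroup.subset[OF H(1)] by blast
  have "Some (i, c i \<otimes> x \<otimes> inv (c i), i) \<in> brandt_sub H c" using eq x i by simp
  then obtain h where "c i \<otimes> x \<otimes> inv (c i) = c i \<otimes> h \<otimes> inv (c i)" "h \<in> H"
    unfolding brandt_sub_def by blast
  moreover have "h \<in> carrier G" using subgroup.mem_carrier[OF H(1) \<open>h \<in> H\<close>] .
  ultimately have "x = h" using x i by simp
  then show False using x \<open>h \<in> H\<close> by blast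
qed

definition diagonal :: "('k \<times> 'a \<times> 'k) option set" where
  "diagonal = insert None {Some (i, g, i) | i g. i \<in> K \<and> g \<in> carrier G}"

lemma diagonal_cases:
  assumes "x \<in> diagonal"
  obtains "x = None" | i g where "x = Some (i, g, i)" "i \<in> K" "g \<in> carrier G"
  using assms unfolding diagonal_def by blast

lemma diagonal_inverse_subsemigroup: "inverse_subsemigroup B bmul diagonal"
  unfolding inverse_subsemigroup_iff
proof (intro conjI ballI subsetI)
  fix x assume x: "x \<in> diagonal"
  then show "x \<in> B" by (cases rule: diagonal_cases) simp_all
  from x show "rees0_inv G x \<in> diagonal"
    by (cases rule: diagonal_cases) (simp_all add: diagonal_def)
  fix y assume y: "y \<in> diagonal"
  from x show "bmul x y \<in> diagonal"
  proof (cases rule: diagonal_cases)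
    case x: (2 i g)
    from y show ?thesis
      by (cases rule: diagonal_cases) (use x in \<open>simp_all add: diagonal_def\<close>)
  qed (simp add: diagonal_def)
qed

lemma diagonal_neq_B:
  assumes "i \<in> K" "j \<in> K" "i \<noteq> j"
  shows "diagonal \<noteq> B"
proof
  assume "diagonal = B"
  then have "Some (i, \<one>, j) \<in> diagonal" using assms by simp
  then show False using assms by (auto simp: diagonal_def)
qed

end

locale brandt_pair = brandt +
  fixes a b
  assumes K_eq: "K = {a, b}" and a_neq_b: "a \<noteq> b"
begin

lemma a_in_K [simp]: "a \<in> K" and b_in_K [simp]: "b \<in> K"
  using K_eq by auto

lemma eq_B_if_block_full:
  assumes S: "inverse_subsemigroup B bmul S" and g: "Some (a, g, b) \<in> S"
    and full: "block S a a = carrier G"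
  shows "S = B"
proof -
  have mul: "\<And>x y. x \<in> S \<Longrightarrow> y \<in> S \<Longrightarrow> bmul x y \<in> S"
    and inv: "\<And>x. x \<in> S \<Longrightarrow> rees0_inv G x \<in> S" and sub: "S \<subseteq> B"
    using S by (auto simp: inverse_subsemigroup_iff)
  have gG: "g \<in> carrier G" using g sub by auto
  have aa: "Some (a, x, a) \<in> S" if "x \<in> carrier G" for x
    using full that by (auto simp: block_def)
  have ab: "Some (a, x, b) \<in> S" if x: "x \<in> carrier G" for x
  proof -
    have "bmul (Some (a, x \<otimes> inv g, a)) (Some (a, g, b)) \<in> S" using g gG x by (intro mul aa) auto
    moreover have "x \<otimes> inv g \<otimes> g = x" using x gG by (simp add: m_assoc)
    ultimately show ?thesis using x gG by simp
  qed
  have ba: "Some (b, x, a) \<in> S" if x: "x \<in> carrier G" for x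
    using inv[OF ab[of "inv x"]] x by simp
  have bb: "Some (b, x, b) \<in> S" if x: "x \<in> carrier G" for x
    using mul[OF ba[of \<one>] ab[OF x]] x by simp
  have "B \<subseteq> S"
  proof
    fix y assume "y \<in> B"
    then show "y \<in> S"
    proof (cases rule: in_B_cases)
      case 1
      have "bmul (Some (a, \<one>, b)) (Some (a, \<one>, b)) \<in> S" by (intro mul ab) auto
      then show ?thesis using 1 a_neq_b by simp
    next
      case (2 i x j)
      then show ?thesis using aa ab ba bb K_eq by auto
    qed
  qed
  then show ?thesis using sub by blast
qed

lemma corner_blocks:
  assumes S: "inverse_subsemigroup B bmul S" "S \<noteq> B" and g: "Some (a, g, b) \<in> S"
  shows "subgroup (block S a a) G" "block S a a \<noteq> carrier G"
    and "block S a b \<in> rcosets (block S a a)"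
proof -
  show H: "subgroup (block S a a) G" by (rule block_subgroup[OF S(1) g])
  show "block S a a \<noteq> carrier G" using eq_B_if_block_full[OF S(1) g] S(2) by blast
  have "g \<in> carrier G" using S(1) g by (auto simp: inverse_subsemigroup_iff)
  then show "block S a b \<in> rcosets (block S a a)"
    using block_eq_rcos[OF S(1) g] rcosetsI[OF subgroup.subset[OF H]] by simp
qed

lemma exists_proper_subgroup_if_cover:
  assumes "proper_inverse_cover B bmul C"
  shows "\<exists>H. subgroup H G \<and> H \<noteq> carrier G"
proof -
  have "Some (a, \<one>, b) \<in> \<Union>C" using assms by (simp add: proper_inverse_cover_def)
  then obtain S where S: "S \<in> C" "Some (a, \<one>, b) \<in> S" by blast
  then have "inverse_subsemigroup B bmul S" "S \<noteq> B"
    using assms unfolding proper_inverse_cover_def by auto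
  then show ?thesis using corner_blocks(1,2) S(2) by metis
qed

lemma min_proper_index_le_card_corner_members:
  assumes fin: "finite (carrier G)" and cover: "proper_inverse_cover B bmul C"
  shows "min_proper_index G \<le> card {S \<in> C. \<exists>g. Some (a, g, b) \<in> S}" (is "_ \<le> card ?C'")
proof -
  have "min_proper_index G \<le> card ((\<lambda>S. block S a b) ` ?C')"
  proof (rule min_proper_index_le_card_if_rcosets_cover[OF fin])
    fix A assume "A \<in> (\<lambda>S. block S a b) ` ?C'"
    then obtain S g where "S \<in> C" "Some (a, g, b) \<in> S" "A = block S a b" by blast
    then show "\<exists>H. subgroup H G \<and> H \<noteq> carrier G \<and> A \<in> rcosets H"
      using corner_blocks[of S g] cover unfolding proper_inverse_cover_def by blast
  next
    show "carrier G \<subseteq> \<Union>((\<lambda>S. block S a b) ` ?C')"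
    proof
      fix x assume x: "x \<in> carrier G"
      then have "Some (a, x, b) \<in> \<Union>C" using cover by (simp add: proper_inverse_cover_def)
      then show "x \<in> \<Union>((\<lambda>S. block S a b) ` ?C')" using x unfolding block_def by blast
    qed
  qed
  also have "\<dots> \<le> card ?C'"
    using cover by (intro card_image_le) (simp add: proper_inverse_cover_def)
  finally show ?thesis .
qed

lemma Suc_min_proper_index_le_card_cover_if_all_meet_corner:
  assumes fin: "finite (carrier G)" and cover: "proper_inverse_cover B bmul C"
    and all: "\<And>S. S \<in> C \<Longrightarrow> \<exists>g. Some (a, g, b) \<in> S"
  shows "min_proper_index G + 1 \<le> card C"
proof -
  have "min_proper_index G + 1 \<le> card ((\<lambda>S. block S a a) ` C)"
  proof (rule Suc_min_proper_index_le_card_if_subgroups_cover[OF fin])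
    have "None \<in> \<Union>C" using cover by (simp add: proper_inverse_cover_def)
    then show "(\<lambda>S. block S a a) ` C \<noteq> {}" by blast
  next
    fix H assume "H \<in> (\<lambda>S. block S a a) ` C"
    then obtain S where S: "S \<in> C" "H = block S a a" by blast
    then obtain g where "Some (a, g, b) \<in> S" using all by blast
    then show "subgroup H G \<and> H \<noteq> carrier G"
      using corner_blocks(1,2)[of S g] S cover unfolding proper_inverse_cover_def by blast
  next
    show "carrier G \<subseteq> \<Union>((\<lambda>S. block S a a) ` C)"
    proof
      fix x assume x: "x \<in> carrier G"
      then have "Some (a, x, a) \<in> \<Union>C" using cover by (simp add: proper_inverse_cover_def)
      then show "x \<in> \<Union>((\<lambda>S. block S a a) ` C)" using x unfolding block_def by blast
    qed
  qed
  also have "\<dots> \<le> card C"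
    using cover by (intro card_image_le) (simp add: proper_inverse_cover_def)
  finally show ?thesis .
qed

lemma Suc_min_proper_index_le_card_cover:
  assumes fin: "finite (carrier G)" and cover: "proper_inverse_cover B bmul C"
  shows "min_proper_index G + 1 \<le> card C"
proof (cases "\<forall>S\<in>C. \<exists>g. Some (a, g, b) \<in> S")
  case True
  then show ?thesis using Suc_min_proper_index_le_card_cover_if_all_meet_corner[OF fin cover] by blast
next
  case False
  then have "card {S \<in> C. \<exists>g. Some (a, g, b) \<in> S} < card C"
    using cover by (intro psubset_card_mono) (auto simp: proper_inverse_cover_def)
  then show ?thesis using min_proper_index_le_card_corner_members[OF fin cover] by simp
qed

lemma Union_eq_B_if_corner_covered:
  assumes F: "\<And>S. S \<in> F \<Longrightarrow> inverse_subsemigroup B bmul S" and diag: "diagonal \<in> F"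
    and corner: "\<And>x. x \<in> carrier G \<Longrightarrow> \<exists>S\<in>F. Some (a, x, b) \<in> S"
  shows "\<Union>F = B"
proof
  show "\<Union>F \<subseteq> B" using F unfolding inverse_subsemigroup_iff by blast
  show "B \<subseteq> \<Union>F"
  proof
    fix y assume "y \<in> B"
    then show "y \<in> \<Union>F"
    proof (cases rule: in_B_cases)
      case y: (2 i x j)
      show ?thesis
      proof (cases "i = j")
        case True
        then show ?thesis using diag y unfolding diagonal_def by blast
      next
        case False
        then consider "i = a" "j = b" | "i = b" "j = a" using y K_eq by auto
        then show ?thesis
        proof cases
          case 1
          then show ?thesis using corner y by blast
        next
          case 2
          obtain S where S: "S \<in> F" "Some (a, inv x, b) \<in> S" using corner y by blast
          then have "rees0_inv G (Some (a, inv x, b)) \<in> S"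
            using F unfolding inverse_subsemigroup_iff by blast
          then show ?thesis using S y 2 by auto
        qed
      qed
    qed (use diag in \<open>auto simp: diagonal_def\<close>)
  qed
qed

lemma proper_inverse_cover_from_subgroup:
  assumes fin: "finite (carrier G)" and H: "subgroup H G" "H \<noteq> carrier G"
  obtains C where "proper_inverse_cover B bmul C" "card C \<le> card (rcosets H) + 1"
proof -
  have "\<forall>Q\<in>rcosets H. \<exists>g. g \<in> Q"
    using rcos_self[OF _ H(1)] unfolding RCOSETS_def by blast
  then obtain rep where rep: "\<And>Q. Q \<in> rcosets H \<Longrightarrow> rep Q \<in> Q" by metis
  have rep_coset: "rep Q \<in> carrier G \<and> Q = H #> rep Q" if Q: "Q \<in> rcosets H" for Q
  proof -
    obtain g where g: "g \<in> carrier G" "Q = H #> g" using Q unfolding RCOSETS_def by blast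
    then have "rep Q \<in> H #> g" using rep[OF Q] by simp
    then show ?thesis
      using g repr_independence[OF _ g(1) H(1)] r_coset_subset_G[OF subgroup.subset[OF H(1)] g(1)]
      by blast
  qed
  define twist where "twist Q = (\<lambda>i. if i = a then \<one> else inv (rep Q))" for Q
  define C where "C = insert diagonal ((\<lambda>Q. brandt_sub H (twist Q)) ` (rcosets H))"
  have twist_G: "twist Q ` K \<subseteq> carrier G" if "Q \<in> rcosets H" for Q
    using rep_coset[OF that] unfolding twist_def by auto
  have finR: "finite (rcosets H)"
    using rcosets_subset_PowG[OF H(1)] fin by (meson finite_Pow_iff finite_subset)
  have members: "inverse_subsemigroup B bmul S \<and> S \<noteq> B" if "S \<in> C" for S
    using that unfolding C_def
  proof
    assume "S = diagonal"
    then show ?thesis using diagonal_inverse_subsemigroup diagonal_neq_B[OF a_in_K b_in_K a_neq_b]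
      by simp
  next
    assume "S \<in> (\<lambda>Q. brandt_sub H (twist Q)) ` (rcosets H)"
    then obtain Q where Q: "Q \<in> rcosets H" "S = brandt_sub H (twist Q)" by blast
    show ?thesis
      using brandt_sub_inverse_subsemigroup[OF H(1) twist_G[OF Q(1)]]
        brandt_sub_neq_B[OF H a_in_K, of "twist Q"] Q(2) by (simp add: twist_def)
  qed
  have corner: "\<exists>S\<in>C. Some (a, x, b) \<in> S" if x: "x \<in> carrier G" for x
  proof -
    define Q where "Q = H #> x"
    have Q: "Q \<in> rcosets H" unfolding Q_def using rcosetsI[OF subgroup.subset[OF H(1)] x] .
    have "x \<in> H #> rep Q" using rep_coset[OF Q] rcos_self[OF x H(1)] by (simp add: Q_def)
    then obtain h where h: "h \<in> H" "x = h \<otimes> rep Q" unfolding r_coset_def by blast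
    have "Some (a, twist Q a \<otimes> h \<otimes> inv (twist Q b), b) \<in> brandt_sub H (twist Q)"
      using h(1) by (intro brandt_sub_memI) auto
    moreover have "twist Q a \<otimes> h \<otimes> inv (twist Q b) = x"
      using h rep_coset[OF Q] subgroup.mem_carrier[OF H(1) h(1)] a_neq_b by (simp add: twist_def)
    ultimately show ?thesis using Q unfolding C_def by auto
  qed
  have "\<Union>C = B"
    using members corner by (intro Union_eq_B_if_corner_covered) (auto simp: C_def)
  then have "proper_inverse_cover B bmul C"
    unfolding proper_inverse_cover_def using members finR by (simp add: C_def)
  moreover have "card C \<le> card (rcosets H) + 1"
  proof -
    have "card C \<le> Suc (card ((\<lambda>Q. brandt_sub H (twist Q)) ` (rcosets H)))"
      unfolding C_def using finR by (simp add: card_insert_if)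
    then show ?thesis using card_image_le[OF finR, of "\<lambda>Q. brandt_sub H (twist Q)"] by simp
  qed
  ultimately show ?thesis using that by blast
qed

lemma sigma_i_trivial_group:
  assumes "card (carrier G) = 1"
  shows "sigma_i B bmul = \<infinity>"
proof (rule sigma_i_eq_infinity)
  obtain x where "carrier G = {x}" using assms by (rule card_1_singletonE)
  then have "carrier G = {\<one>}" using one_closed by auto
  then have improper: "H = carrier G" if "subgroup H G" for H
    using subgroup.subset[OF that] subgroup.one_closed[OF that] by auto
  fix C
  show "\<not> proper_inverse_cover B bmul C"
  proof
    assume "proper_inverse_cover B bmul C"
    then obtain H where "subgroup H G" "H \<noteq> carrier G"
      using exists_proper_subgroup_if_cover by blast
    then show False using improper by simp
  qed
qed

lemma sigma_i_nontrivial_group: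
  assumes fin: "finite (carrier G)" and "1 < card (carrier G)"
  shows "sigma_i B bmul = enat (min_proper_index G + 1)"
proof -
  have "{\<one>} \<noteq> carrier G"
  proof
    assume "{\<one>} = carrier G"
    then have "card (carrier G) = 1" by (metis is_singletonI is_singleton_altdef)
    then show False using assms(2) by simp
  qed
  then obtain H where H: "subgroup H G" "H \<noteq> carrier G" "card (rcosets H) = min_proper_index G"
    by (rule min_proper_index_attained[OF triv_subgroup])
  obtain C where C: "proper_inverse_cover B bmul C" "card C \<le> card (rcosets H) + 1"
    by (rule proper_inverse_cover_from_subgroup[OF fin H(1,2)])
  have "card C = min_proper_index G + 1"
    using C(2) H(3) Suc_min_proper_index_le_card_cover[OF fin C(1)] by simp
  then show ?thesis
    by (rule sigma_i_eq_enat[OF C(1)]) (rule Suc_min_proper_index_le_card_cover[OF fin])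
qed

end

theorem mainTheorem16:
  fixes G :: "('g, 'b) monoid_scheme" and K :: "'k set"
  assumes "group G" and "finite (carrier G)" and "card K = 2"
  shows "(card (carrier G) = 1 \<longrightarrow>
            sigma_i (rees0_carrier K G) (rees0_mult G (diag_matrix G)) = \<infinity>)
       \<and> (card (carrier G) > 1 \<longrightarrow>
            sigma_i (rees0_carrier K G) (rees0_mult G (diag_matrix G))
              = enat (min_proper_index G + 1))"
proof -
  obtain a b where K: "K = {a, b}" "a \<noteq> b" using assms(3) unfolding card_2_iff by blast
  interpret brandt_pair G K a b
    by (intro brandt_pair.intro brandt.intro brandt_pair_axioms.intro assms(1) K)
  show ?thesis
    using sigma_i_trivial_group sigma_i_nontrivial_group[OF assms(2)] by simp
qed

end
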